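(* Let $d_{2,Q}(t,x)=x^4+2t^2x^2-8t^2x+t^4$, $d_{2,P+Q}(t,x)=x^4+2t^2x^2-8t^2x+t^4+t(4x^3-4t^2x+4t^2)$ and $g(t,x)=x^3-t^2x+t^2$. Then there are no integers $t_0>2$ and $x_0$ such that $d_{2,Q}(t_0,x_0)=0$, or $d_{2,P+Q}(t_0,x_0)=0$, or $g(t_0,x_0)=0$.
   Context: These are the $2$-division polynomials (after clearing denominators) of the points $Q=(0,t)$ and $P+Q$ (with $P=(t,t)$) and one quarter of $\psi_2^2$ on $E: y^2=x^3-t^2x+t^2$ over $\mathbb Q(t)$. *)

theory Defs
  imports Main
begin

definition d2Q :: "int \<Rightarrow> int \<Rightarrow> int" where
  "d2Q t x = x^4 + 2*t^2*x^2 - 8*t^2*x + t^4"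

definition d2PQ :: "int \<Rightarrow> int \<Rightarrow> int" where
  "d2PQ t x = x^4 + 2*t^2*x^2 - 8*t^2*x + t^4 + t*(4*x^3 - 4*t^2*x + 4*t^2)"

definition g :: "int \<Rightarrow> int \<Rightarrow> int" where
  "g t x = x^3 - t^2*x + t^2"

end

theory Submission
  imports Defs
begin

text \<open>Writing \<open>d2Q = (x^2 - t^2)^2 + 4t^2 x(x - 2)\<close>, a root needs \<open>x = 1\<close>, and then
\<open>(t^2 - 3)^2 = 8\<close>, or \<open>x^2 = t^2\<close> with \<open>x \<in> {0, 2}\<close>.
With \<open>u = 2x - t\<close>, \<open>d2PQ = 0\<close> reads \<open>(t^2 + 6tu + u^2)^2 = 64t^2 u\<close>; since
\<open>t^2 + 6tu + u^2 - 8tu = (t - u)^2\<close>, for \<open>t > 0\<close> this forces \<open>t = u = 1\<close>.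
A root of \<open>g\<close> gives \<open>x^3 = t^2(x - 1)\<close>, and \<open>x - 1\<close> is coprime to \<open>x\<close>, so \<open>x \<in> {0, 2}\<close>
and \<open>t^2 \<in> {0, 8}\<close>. Finally, 8 is not a square.\<close>

lemma int_square_not_between_consecutive_squares:
  fixes a k :: int
  assumes "0 \<le> k"
  shows "\<not> (k^2 < a^2 \<and> a^2 < (k + 1)^2)"
proof
  assume "k^2 < a^2 \<and> a^2 < (k + 1)^2"
  then have "k^2 < \<bar>a\<bar>^2" "\<bar>a\<bar>^2 < (k + 1)^2" by simp_all
  then have "k < \<bar>a\<bar>" "\<bar>a\<bar> < k + 1"
    using assms by (simp_all only: power_less_imp_less_base abs_ge_zero)
  then show False by linarith
qed

lemma d2Q_eq_sum: "d2Q t x = (x^2 - t^2)^2 + 4*t^2 * (x*(x - 2))"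
  unfolding d2Q_def by (simp add: algebra_simps power2_eq_square power4_eq_xxxx)

lemma d2Q_eq_0_imp:
  assumes "d2Q t x = 0"
  shows "t = 0 \<or> t^2 = 4"
proof (cases "x = 1")
  case True
  have "(t^2 - 3)^2 = 8"
    using assms True unfolding d2Q_def by (simp add: algebra_simps power2_eq_square power4_eq_xxxx)
  with int_square_not_between_consecutive_squares[of 2 "t^2 - 3"] show ?thesis by simp
next
  case False
  then have "x \<le> 0 \<or> 2 \<le> x" by linarith
  then have "x*(x - 2) \<ge> 0" by (auto simp: mult_nonpos_nonpos)
  then have "0 \<le> 4*t^2 * (x*(x - 2))" by simp
  moreover have "0 \<le> (x^2 - t^2)^2" by simp
  ultimately have "(x^2 - t^2)^2 = 0" "4*t^2 * (x*(x - 2)) = 0"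
    using assms d2Q_eq_sum[of t x] by linarith+
  then have "x^2 = t^2" "t = 0 \<or> x = 0 \<or> x = 2" by simp_all
  then show ?thesis by auto
qed

lemma d2PQ_eq_quartic:
  "16 * d2PQ t x = (t^2 + 6*t*(2*x - t) + (2*x - t)^2)^2 - 64*t^2*(2*x - t)"
  unfolding d2PQ_def by (simp add: algebra_simps power2_eq_square power4_eq_xxxx power3_eq_cube)

lemma quartic_eq_64_t2u_imp:
  fixes t u :: int
  assumes "0 < t" and eq: "(t^2 + 6*t*u + u^2)^2 = 64*t^2*u"
  shows "t = 1 \<and> u = 1"
proof (cases "u \<le> 0")
  case True
  then have "64*t^2*u \<le> 0" by (simp add: mult_nonneg_nonpos)
  with eq have "64*t^2*u = 0" by (metis antisym zero_le_power2)
  with \<open>0 < t\<close> eq show ?thesis by simp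
next
  case False
  have "(t^2 + 6*t*u + u^2)^2 - 64*t^2*u
          = (t - u)^2 * (t^2 + 14*t*u + u^2) + 64*t^2*u*(u - 1)"
    by (simp add: algebra_simps power2_eq_square)
  moreover have "0 \<le> (t - u)^2 * (t^2 + 14*t*u + u^2)"
    using \<open>0 < t\<close> False by simp
  moreover have "0 \<le> 64*t^2*u*(u - 1)" using False by simp
  ultimately have "(t - u)^2 * (t^2 + 14*t*u + u^2) = 0" "t^2*u*(u - 1) = 0"
    using eq by linarith+
  moreover have "0 < t^2 + 14*t*u + u^2" using \<open>0 < t\<close> False by (simp add: add_pos_pos)
  ultimately show ?thesis using \<open>0 < t\<close> False by simp
qed

lemma d2PQ_eq_0_imp:
  assumes "0 < t" and "d2PQ t x = 0"
  shows "t = 1"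
  using quartic_eq_64_t2u_imp[OF assms(1), of "2*x - t"] assms(2) d2PQ_eq_quartic[of t x] by simp

lemma g_eq_0_imp:
  assumes "g t x = 0"
  shows "t = 0"
proof -
  have eq: "x^3 = t^2 * (x - 1)" using assms unfolding g_def by (simp add: algebra_simps)
  have "coprime (x - 1) (x^3)" by simp
  moreover have "x - 1 dvd x^3" by (simp add: eq)
  ultimately have "is_unit (x - 1)" by (rule coprime_common_divisor[OF _ dvd_refl])
  then have "x = 0 \<or> x = 2" by auto
  then show ?thesis
  proof
    assume "x = 0"
    with eq show ?thesis by simp
  next
    assume "x = 2"
    with eq have "t^2 = 8" by simp
    with int_square_not_between_consecutive_squares[of 2 t] show ?thesis by simp
  qed
qed

theorem proposition4p2:
  "\<not> (\<exists>t0 x0 :: int. t0 > 2 \<and> (d2Q t0 x0 = 0 \<or> d2PQ t0 x0 = 0 \<or> g t0 x0 = 0))"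
proof clarify
  fix t x :: int
  assume "t > 2" and roots: "d2Q t x = 0 \<or> d2PQ t x = 0 \<or> g t x = 0"
  have "2^2 < t^2" using \<open>t > 2\<close> by (rule power_strict_mono) simp_all
  with \<open>t > 2\<close> have "\<not> (t = 0 \<or> t^2 = 4)" "t \<noteq> 1" by auto
  with \<open>t > 2\<close> roots show False
    by (metis d2Q_eq_0_imp d2PQ_eq_0_imp g_eq_0_imp order.strict_trans zero_less_numeral)
qed

end
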